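(* Let $\eta$ be a probability distribution on $\mathbb{R}$ with finite mean $m(\eta)=\int x\,d\eta(x)$ whose support is not bounded from above (i.e. $\eta((y,\infty))>0$ for every $y\in\mathbb{R}$). Then for every finite $a>0$ and every $b>m(\eta)$ there exists a probability distribution $\kappa$ on $\mathbb{R}$ such that \[ \mathrm{KL}(\eta,\kappa)\le a \qquad\text{and}\qquad m(\kappa)\ge b . \]
   Context: $\mathrm{KL}(\eta,\kappa)=\int \log\big(\tfrac{d\eta}{d\kappa}(x)\big)\,d\eta(x)$ if $\eta\ll\kappa$ and $+\infty$ otherwise (Kullback–Leibler divergence). $m(\kappa)$ denotes the mean of $\kappa$. *)

theory Defs
  imports "HOL-Probability.Probability"
begin

text \<open>The negative part of the integrand is always
  eta-integrable when kappa is a probability measure, so the integral is infinite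
  exactly when the integrand is not eta-integrable.\<close>

definition KL :: "'a measure \<Rightarrow> 'a measure \<Rightarrow> ereal" where
  "KL \<eta> \<kappa> =
     (if absolutely_continuous \<kappa> \<eta> \<and> sets \<eta> = sets \<kappa> \<and>
         integrable \<eta> (\<lambda>x. ln (enn2real (RN_deriv \<kappa> \<eta> x)))
      then ereal (\<integral>x. ln (enn2real (RN_deriv \<kappa> \<eta> x)) \<partial>\<eta>)
      else \<infinity>)"

end

(* Tilt \<eta> by the density g = e + (1 - e) / \<eta>(y,\<infinity>) * 1_(y,\<infinity>) with e = exp (-a); the
   tail (y,\<infinity>) has positive mass because the support of \<eta> is unbounded above.  Since
   g \<ge> e, the density d\<eta>/d\<kappa> = 1/g is at most 1/e, so KL(\<eta>,\<kappa>) = \<integral> -ln g d\<eta> \<le> -ln e = a.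
   The mean of \<kappa> is e m(\<eta>) + (1 - e) E[X | X > y] \<ge> e m(\<eta>) + (1 - e) y, and the choice
   y = (b - e m(\<eta>)) / (1 - e) makes the right-hand side equal to b. *)

theory Submission
  imports Defs
begin

lemma integrable_ln_bounded:
  fixes M :: "'a measure" and g :: "'a \<Rightarrow> real"
  assumes "finite_measure M" and [measurable]: "g \<in> borel_measurable M"
    and "0 < e" and g_ge: "\<And>x. x \<in> space M \<Longrightarrow> e \<le> g x"
    and g_le: "\<And>x. x \<in> space M \<Longrightarrow> g x \<le> C"
  shows "integrable M (\<lambda>x. ln (g x))"
proof (rule finite_measure.integrable_const_bound[OF assms(1)])
  show "AE x in M. norm (ln (g x)) \<le> \<bar>ln e\<bar> + \<bar>ln C\<bar>"
  proof (rule AE_I2)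
    fix x assume x: "x \<in> space M"
    have "ln e \<le> ln (g x)" and "ln (g x) \<le> ln C"
      using g_ge[OF x] g_le[OF x] \<open>0 < e\<close> by simp_all
    then show "norm (ln (g x)) \<le> \<bar>ln e\<bar> + \<bar>ln C\<bar>"
      by auto
  qed
qed measurable

lemma KL_bounded_density:
  fixes M :: "'a measure" and g :: "'a \<Rightarrow> real"
  assumes "finite_measure M" and g[measurable]: "g \<in> borel_measurable M"
    and "0 < e" and g_ge: "\<And>x. x \<in> space M \<Longrightarrow> e \<le> g x"
    and g_le: "\<And>x. x \<in> space M \<Longrightarrow> g x \<le> C"
  shows "KL M (density M g) = ereal (\<integral>x. - ln (g x) \<partial>M)"
proof -
  interpret finite_measure M by fact
  define N where "N = density M g"
  have sets_N: "sets N = sets M"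
    by (simp add: N_def)
  have g_pos: "0 < g x" if "x \<in> space M" for x
    using g_ge[OF that] \<open>0 < e\<close> by linarith
  have inv_g[measurable]: "(\<lambda>x. ennreal (1 / g x)) \<in> borel_measurable N"
    unfolding measurable_cong_sets[OF sets_N refl] by measurable
  have M_eq: "density N (\<lambda>x. ennreal (1 / g x)) = M"
  proof -
    have "density N (\<lambda>x. ennreal (1 / g x)) = density M (\<lambda>x. ennreal (g x) * ennreal (1 / g x))"
      unfolding N_def by (rule density_density_eq) auto
    also have "\<dots> = density M (\<lambda>_. 1)"
    proof (intro density_cong AE_I2)
      fix x assume "x \<in> space M"
      then show "ennreal (g x) * ennreal (1 / g x) = 1"
        using g_pos[of x] by (simp add: ennreal_mult''[symmetric] less_imp_le)
    qed simp_all
    finally show ?thesis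
      by (simp add: density_1)
  qed
  have ac: "absolutely_continuous N M"
    using absolutely_continuousI_density[OF inv_g] by (simp add: M_eq)
  have "AE x in N. ennreal (1 / g x) = RN_deriv N M x"
    using RN_deriv_unique_sigma_finite[OF inv_g M_eq] sigma_finite_measure_axioms by simp
  then have "AE x in M. ennreal (1 / g x) = RN_deriv N M x"
    by (rule absolutely_continuous_AE[OF sets_N[symmetric] ac])
  then have ln_RN: "AE x in M. ln (enn2real (RN_deriv N M x)) = - ln (g x)"
    using AE_space
  proof eventually_elim
    case (elim x)
    have "0 < g x"
      using g_pos elim(2) .
    moreover from this elim(1) have "enn2real (RN_deriv N M x) = 1 / g x"
      by (metis enn2real_ennreal less_imp_le zero_le_divide_1_iff)
    ultimately show ?case
      by (simp add: ln_div)
  qed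
  have RN[measurable]: "RN_deriv N M \<in> borel_measurable M"
    using borel_measurable_RN_deriv[of N M] unfolding measurable_cong_sets[OF sets_N refl] .
  have "integrable M (\<lambda>x. - ln (g x))"
    using integrable_ln_bounded[OF assms] by simp
  moreover have "integrable M (\<lambda>x. ln (enn2real (RN_deriv N M x))) \<longleftrightarrow> integrable M (\<lambda>x. - ln (g x))"
    by (rule integrable_cong_AE[OF _ _ ln_RN]) measurable
  moreover have "(\<integral>x. ln (enn2real (RN_deriv N M x)) \<partial>M) = (\<integral>x. - ln (g x) \<partial>M)"
    by (rule integral_cong_AE[OF _ _ ln_RN]) measurable
  ultimately show ?thesis
    using ac sets_N by (simp add: KL_def N_def)
qed

definition tail_tilt :: "real measure \<Rightarrow> real \<Rightarrow> real \<Rightarrow> real \<Rightarrow> real" where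
  "tail_tilt M e y x = e + (1 - e) / measure M {y<..} * indicator {y<..} x"

lemma tail_tilt_measurable[measurable]: "tail_tilt M e y \<in> borel_measurable borel"
  unfolding tail_tilt_def by measurable

lemma integral_indicator_greaterThan_ge:
  fixes M :: "real measure"
  assumes "finite_measure M" and "sets M = sets borel" and "integrable M (\<lambda>x. x)"
  shows "y * measure M {y<..} \<le> (\<integral>x. indicator {y<..} x * x \<partial>M)"
proof -
  interpret finite_measure M by fact
  have tail: "{y<..} \<in> sets M"
    using assms(2) by simp
  have "y * measure M {y<..} = (\<integral>x. indicator {y<..} x * y \<partial>M)"
    using tail by simp
  also have "\<dots> \<le> (\<integral>x. indicator {y<..} x * x \<partial>M)"
  proof (rule integral_mono)
    show "integrable M (\<lambda>x. indicator {y<..} x * y)"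
      using tail by (intro integrable_mult_left integrable_real_indicator) (auto simp: emeasure_eq_measure)
    show "integrable M (\<lambda>x. indicator {y<..} x * x)"
      using integrable_real_mult_indicator[OF tail assms(3)] by (simp add: mult.commute)
  qed (auto simp: indicator_def)
  finally show ?thesis .
qed

context
  fixes M :: "real measure" and e y :: real
  assumes prob: "prob_space M" and sets_M[measurable_cong]: "sets M = sets borel"
    and e_pos: "0 < e" and e_less_1: "e < 1" and tail_pos: "0 < measure M {y<..}"
begin

interpretation prob_space M by (fact prob)

lemma tail_tilt_ge: "e \<le> tail_tilt M e y x"
  using e_less_1 tail_pos by (simp add: tail_tilt_def)

lemma tail_tilt_nonneg: "0 \<le> tail_tilt M e y x"
  using e_pos tail_tilt_ge[of x] by linarith

lemma tail_tilt_le: "tail_tilt M e y x \<le> e + (1 - e) / measure M {y<..}"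
  using e_less_1 tail_pos by (simp add: tail_tilt_def indicator_def)

lemma integrable_indicator_tail: "integrable M (indicator {y<..} :: real \<Rightarrow> real)"
  using sets_M by (intro integrable_real_indicator) (auto simp: emeasure_eq_measure)

lemma integrable_tail_tilt: "integrable M (tail_tilt M e y)"
  unfolding tail_tilt_def using integrable_indicator_tail by simp

lemma integral_tail_tilt: "(\<integral>x. tail_tilt M e y x \<partial>M) = 1"
proof -
  have "(\<integral>x. tail_tilt M e y x \<partial>M) = e + (1 - e) / measure M {y<..} * measure M {y<..}"
    unfolding tail_tilt_def using integrable_indicator_tail sets_M by (simp add: prob_space)
  then show ?thesis
    using tail_pos by simp
qed

lemma prob_space_density_tail_tilt: "prob_space (density M (tail_tilt M e y))"
proof
  have "emeasure (density M (tail_tilt M e y)) (space M) = (\<integral>\<^sup>+x. ennreal (tail_tilt M e y x) \<partial>M)"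
    by (simp add: emeasure_density)
  also have "\<dots> = ennreal (\<integral>x. tail_tilt M e y x \<partial>M)"
    by (intro nn_integral_eq_integral integrable_tail_tilt AE_I2 tail_tilt_nonneg)
  finally show "emeasure (density M (tail_tilt M e y)) (space (density M (tail_tilt M e y))) = 1"
    by (simp add: integral_tail_tilt)
qed

lemma KL_density_tail_tilt_le: "KL M (density M (tail_tilt M e y)) \<le> ereal (- ln e)"
proof -
  have "KL M (density M (tail_tilt M e y)) = ereal (\<integral>x. - ln (tail_tilt M e y x) \<partial>M)"
    using e_pos tail_tilt_ge tail_tilt_le
    by (intro KL_bounded_density finite_measure_axioms) measurable
  moreover have "(\<integral>x. - ln (tail_tilt M e y x) \<partial>M) \<le> (\<integral>x. - ln e \<partial>M)"
  proof (rule integral_mono)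
    show "integrable M (\<lambda>x. - ln (tail_tilt M e y x))"
      using integrable_ln_bounded[OF finite_measure_axioms _ e_pos tail_tilt_ge tail_tilt_le] by simp
    show "- ln (tail_tilt M e y x) \<le> - ln e" for x
      using e_pos tail_tilt_ge[of x] by simp
  qed simp
  ultimately show ?thesis
    by (simp add: prob_space)
qed

lemma mean_density_tail_tilt_ge:
  assumes "integrable M (\<lambda>x. x)"
  shows "integrable (density M (tail_tilt M e y)) (\<lambda>x. x)"
    and "e * (\<integral>x. x \<partial>M) + (1 - e) * y \<le> (\<integral>x. x \<partial>density M (tail_tilt M e y))"
proof -
  define c where "c = (1 - e) / measure M {y<..}"
  have tilted_x: "(\<lambda>x. tail_tilt M e y x *\<^sub>R x) = (\<lambda>x. e * x + c * (indicator {y<..} x * x))"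
    by (auto simp: tail_tilt_def c_def algebra_simps)
  have int_tail: "integrable M (\<lambda>x. indicator {y<..} x * x)"
    using integrable_real_mult_indicator[of "{y<..}" M, OF _ assms] sets_M by (simp add: mult.commute)
  have int_tilted_x: "integrable M (\<lambda>x. tail_tilt M e y x *\<^sub>R x)"
    unfolding tilted_x using assms int_tail by (intro Bochner_Integration.integrable_add integrable_mult_right)
  have id_meas: "(\<lambda>x. x) \<in> borel_measurable M" and tilt_meas: "tail_tilt M e y \<in> borel_measurable M"
    by measurable
  have tilt_nonneg: "AE x in M. 0 \<le> tail_tilt M e y x"
    by (rule AE_I2) (rule tail_tilt_nonneg)
  note density_facts = id_meas tilt_meas tilt_nonneg
  show "integrable (density M (tail_tilt M e y)) (\<lambda>x. x)"
    using integrable_density[OF density_facts] int_tilted_x by simp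
  have "e * (\<integral>x. x \<partial>M) + (1 - e) * y = e * (\<integral>x. x \<partial>M) + c * (y * measure M {y<..})"
    using tail_pos by (simp add: c_def)
  also have "\<dots> \<le> e * (\<integral>x. x \<partial>M) + c * (\<integral>x. indicator {y<..} x * x \<partial>M)"
    using integral_indicator_greaterThan_ge[OF finite_measure_axioms sets_M assms] e_less_1 tail_pos
    by (intro add_left_mono mult_left_mono) (simp_all add: c_def)
  also have "\<dots> = (\<integral>x. tail_tilt M e y x *\<^sub>R x \<partial>M)"
    unfolding tilted_x using assms int_tail by simp
  also have "\<dots> = (\<integral>x. x \<partial>density M (tail_tilt M e y))"
    by (rule integral_density[OF density_facts, symmetric])
  finally show "e * (\<integral>x. x \<partial>M) + (1 - e) * y \<le> (\<integral>x. x \<partial>density M (tail_tilt M e y))" .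
qed

end

theorem lemma1:
  fixes \<eta> :: "real measure" and a b :: real
  assumes "prob_space \<eta>" and "sets \<eta> = sets borel"
    and "integrable \<eta> (\<lambda>x. x)"
    and "\<And>y. measure \<eta> {y<..} > 0"
    and "a > 0" and "b > (\<integral>x. x \<partial>\<eta>)"
  shows "\<exists>\<kappa> :: real measure. prob_space \<kappa> \<and> sets \<kappa> = sets borel \<and>
           KL \<eta> \<kappa> \<le> ereal a \<and>
           integrable \<kappa> (\<lambda>x. x) \<and> (\<integral>x. x \<partial>\<kappa>) \<ge> b"
proof -
  define e where "e = exp (- a)"
  define y where "y = (b - e * (\<integral>x. x \<partial>\<eta>)) / (1 - e)"
  have e: "0 < e" "e < 1"
    using \<open>a > 0\<close> by (simp_all add: e_def)
  note tilt = assms(1,2) e assms(4)[of y]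
  have "b = e * (\<integral>x. x \<partial>\<eta>) + (1 - e) * y"
    using e by (simp add: y_def)
  moreover have "- ln e = a"
    by (simp add: e_def)
  ultimately show ?thesis
    using prob_space_density_tail_tilt[OF tilt] KL_density_tail_tilt_le[OF tilt]
      mean_density_tail_tilt_ge[OF tilt assms(3)] assms(2)
    by (intro exI[of _ "density \<eta> (tail_tilt \<eta> e y)"]) simp
qed

end
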